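(* For $\alpha\in\mathbb{C}$ and integers $m\geq1$, $r\geq1$, \[ \int_{[0,1]^r}\big[1-(1-\alpha)x_1\cdots x_r\big]^{m-1}dx_1\cdots dx_r=\sum_{m\geq m_1\geq\cdots\geq m_r\geq1}\frac{\alpha^{m_r-1}}{m\,m_1\cdots m_{r-1}}. \]
   Context: For $r=1$ the denominator on the right is just $m$. *)

theory Defs
  imports "HOL-Analysis.Analysis"
begin

end

theory Submission
  imports Defs
begin

text \<open>Write \<open>n = m - 1\<close> and \<open>c = \<alpha> - 1\<close>. Expanding \<open>(1 + c x\<^sub>1\<cdots>x\<^sub>r)\<^sup>n\<close> binomially and
  integrating each monomial \<open>(x\<^sub>1\<cdots>x\<^sub>r)\<^sup>k\<close> to \<open>1/(k+1)\<^sup>r\<close> turns the integral into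
  \<open>T\<^sub>r(n) = \<Sum>\<^sub>k (n choose k) c\<^sup>k/(k+1)\<^sup>r\<close>. By the hockey-stick identity
  \<open>\<Sum>\<^sub>i\<^sub>\<le>\<^sub>n (i choose k) = (n+1 choose k+1)\<close> these satisfy
  \<open>T\<^sub>r\<^sub>+\<^sub>1(n) = (\<Sum>\<^sub>i\<^sub>\<le>\<^sub>n T\<^sub>r(i))/(n+1)\<close> with \<open>T\<^sub>0(n) = \<alpha>\<^sup>n\<close>, and splitting off the largest
  index \<open>m\<^sub>1\<close> shows that the nested sum on the right obeys the same recursion in \<open>r\<close>.\<close>

definition binomial_inverse_power_sum :: "'a::field_char_0 \<Rightarrow> nat \<Rightarrow> nat \<Rightarrow> 'a" where
  "binomial_inverse_power_sum c r n = (\<Sum>k\<le>n. of_nat (n choose k) * c ^ k / of_nat (Suc k) ^ r)"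

lemma binomial_inverse_power_sum_0: "binomial_inverse_power_sum c 0 n = (1 + c) ^ n"
  using binomial_ring[of c 1 n] by (simp add: binomial_inverse_power_sum_def add.commute)

lemma binomial_inverse_power_sum_Suc:
  "binomial_inverse_power_sum c (Suc r) n
     = (\<Sum>i\<le>n. binomial_inverse_power_sum c r i) / of_nat (Suc n)"
proof -
  have "(\<Sum>i\<le>n. binomial_inverse_power_sum c r i)
      = (\<Sum>i\<le>n. \<Sum>k\<le>n. of_nat (i choose k) * c ^ k / of_nat (Suc k) ^ r)"
    unfolding binomial_inverse_power_sum_def
    by (intro sum.cong refl sum.mono_neutral_left) auto
  also have "\<dots> = (\<Sum>k\<le>n. of_nat (Suc n choose Suc k) * c ^ k / of_nat (Suc k) ^ r)"
    by (subst sum.swap) (simp add: sum_distrib_right[symmetric] sum_divide_distrib[symmetric]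
        of_nat_sum[symmetric] sum_choose_upper)
  also have "\<dots> = of_nat (Suc n) * binomial_inverse_power_sum c (Suc r) n"
    unfolding binomial_inverse_power_sum_def sum_distrib_left
  proof (intro sum.cong refl)
    fix k
    have "of_nat (Suc n choose Suc k) * of_nat (Suc k) = (of_nat (Suc n) * of_nat (n choose k) :: 'a)"
      by (metis Suc_times_binomial_eq of_nat_mult)
    then show "of_nat (Suc n choose Suc k) * c ^ k / of_nat (Suc k) ^ r
        = of_nat (Suc n) * (of_nat (n choose k) * c ^ k / of_nat (Suc k) ^ Suc r)"
      by (simp add: field_simps del: of_nat_Suc binomial_Suc_Suc)
  qed
  finally show ?thesis
    by (simp add: field_simps del: of_nat_Suc)
qed

definition nonincreasing_lists :: "nat \<Rightarrow> nat \<Rightarrow> nat list set" where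
  "nonincreasing_lists r m = {ms. length ms = r \<and> sorted_wrt (\<ge>) ms \<and> set ms \<subseteq> {1..m}}"

text \<open>A list \<open>ms\<close> stands for \<open>m\<^sub>1 \<ge> \<dots> \<ge> m\<^sub>r\<close>, so \<open>ms ! (r - 1)\<close> is \<open>m\<^sub>r\<close>.\<close>

definition nested_harmonic_sum :: "'a::field_char_0 \<Rightarrow> nat \<Rightarrow> nat \<Rightarrow> 'a" where
  "nested_harmonic_sum a r m =
     (\<Sum>ms \<in> nonincreasing_lists r m.
        a ^ (ms ! (r - 1) - 1) / (of_nat m * (\<Prod>i<r - 1. of_nat (ms ! i))))"

lemma finite_nonincreasing_lists: "finite (nonincreasing_lists r m)"
proof (rule finite_subset)
  show "nonincreasing_lists r m \<subseteq> {ms. set ms \<subseteq> {1..m} \<and> length ms = r}"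
    unfolding nonincreasing_lists_def by auto
qed (simp add: finite_lists_length_eq)

lemma nonincreasing_lists_0: "nonincreasing_lists 0 m = {[]}"
  by (auto simp: nonincreasing_lists_def)

lemma nonincreasing_lists_Suc:
  "nonincreasing_lists (Suc r) (Suc n)
     = (\<lambda>(i, ms). Suc i # ms) ` (SIGMA i:{..n}. nonincreasing_lists r (Suc i))"
proof (intro set_eqI iffI)
  fix xs assume "xs \<in> nonincreasing_lists (Suc r) (Suc n)"
  then obtain x ms where "xs = x # ms" "1 \<le> x" "x \<le> Suc n" "ms \<in> nonincreasing_lists r x"
    unfolding nonincreasing_lists_def by (cases xs) fastforce+
  moreover from \<open>1 \<le> x\<close> obtain i where "x = Suc i" by (cases x) auto
  ultimately show "xs \<in> (\<lambda>(i, ms). Suc i # ms) ` (SIGMA i:{..n}. nonincreasing_lists r (Suc i))"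
    by force
qed (fastforce simp: nonincreasing_lists_def)

lemma nested_harmonic_sum_1:
  "nested_harmonic_sum a 1 (Suc n) = (\<Sum>i\<le>n. a ^ i) / of_nat (Suc n)"
proof -
  have "nonincreasing_lists 1 (Suc n) = (\<lambda>i. [Suc i]) ` {..n}"
    using nonincreasing_lists_Suc[of 0 n] by (auto simp: nonincreasing_lists_0)
  then show ?thesis
    by (simp add: nested_harmonic_sum_def sum.reindex inj_on_def sum_divide_distrib)
qed

lemma nested_harmonic_sum_Suc:
  "nested_harmonic_sum a (Suc (Suc r)) (Suc n)
     = (\<Sum>i\<le>n. nested_harmonic_sum a (Suc r) (Suc i)) / of_nat (Suc n)"
proof -
  have "nested_harmonic_sum a (Suc (Suc r)) (Suc n)
      = (\<Sum>(i, ms) \<in> (SIGMA i:{..n}. nonincreasing_lists (Suc r) (Suc i)).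
          a ^ (ms ! r - 1) / (of_nat (Suc i) * (\<Prod>j<r. of_nat (ms ! j))) / of_nat (Suc n))"
    unfolding nested_harmonic_sum_def nonincreasing_lists_Suc[of "Suc r"]
    by (subst sum.reindex) (simp_all add: inj_on_def case_prod_unfold prod.lessThan_Suc_shift
        field_simps del: of_nat_Suc prod.lessThan_Suc)
  also have "\<dots> = (\<Sum>i\<le>n. nested_harmonic_sum a (Suc r) (Suc i) / of_nat (Suc n))"
    by (simp add: sum.Sigma[symmetric] finite_nonincreasing_lists nested_harmonic_sum_def
        sum_divide_distrib)
  finally show ?thesis
    by (simp add: sum_divide_distrib)
qed

abbreviation unit_interval :: "real measure" where
  "unit_interval \<equiv> restrict_space lborel {0..1}"

lemma product_sigma_finite_unit_interval: "product_sigma_finite (\<lambda>_. unit_interval)"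
  unfolding product_sigma_finite_def
  by (auto intro: sigma_finite_measure_restrict_space lborel.sigma_finite_measure_axioms)

lemma integrable_unit_interval_power: "integrable unit_interval (\<lambda>t. t ^ k)"
  by (subst integrable_restrict_space) (auto simp: mult.commute intro: borel_integrable_atLeastAtMost)

lemma integral_unit_interval_power: "(LINT t | unit_interval. t ^ k) = 1 / Suc k"
  using integral_power[of 0 1 k] by (simp add: integral_restrict_space mult.commute)

lemma
  fixes I :: "'i set"
  assumes "finite I"
  shows integrable_unit_cube_prod_power:
      "integrable (PiM I (\<lambda>_. unit_interval)) (\<lambda>x. \<Prod>i\<in>I. x i ^ k)"
    and integral_unit_cube_prod_power:
      "(LINT x | PiM I (\<lambda>_. unit_interval). (\<Prod>i\<in>I. x i ^ k)) = 1 / Suc k ^ card I"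
  using product_sigma_finite.product_integrable_prod[OF product_sigma_finite_unit_interval,
      of I "\<lambda>_ t. t ^ k"]
    product_sigma_finite.product_integral_prod[OF product_sigma_finite_unit_interval,
      of I "\<lambda>_ t. t ^ k"]
    assms integrable_unit_interval_power
  by (simp_all add: integral_unit_interval_power power_one_over)

lemma integral_unit_cube_binomial:
  fixes I :: "'i set" and c :: complex
  assumes "finite I"
  shows "(LINT x | PiM I (\<lambda>_. unit_interval). (1 + c * complex_of_real (\<Prod>i\<in>I. x i)) ^ n)
       = binomial_inverse_power_sum c (card I) n"
proof -
  have expand: "(1 + c * complex_of_real (\<Prod>i\<in>I. x i)) ^ n
      = (\<Sum>k\<le>n. of_nat (n choose k) * c ^ k * complex_of_real (\<Prod>i\<in>I. x i ^ k))" for x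
    using binomial_ring[of "c * complex_of_real (\<Prod>i\<in>I. x i)" 1 n]
    by (simp add: add.commute power_mult_distrib prod_power_distrib mult.assoc)
  have "(LINT x | PiM I (\<lambda>_. unit_interval). (1 + c * complex_of_real (\<Prod>i\<in>I. x i)) ^ n)
      = (\<Sum>k\<le>n. LINT x | PiM I (\<lambda>_. unit_interval).
           of_nat (n choose k) * c ^ k * complex_of_real (\<Prod>i\<in>I. x i ^ k))"
    unfolding expand
    by (intro Bochner_Integration.integral_sum integrable_mult_right integrable_of_real
        integrable_unit_cube_prod_power assms)
  also have "\<dots> = (\<Sum>k\<le>n. of_nat (n choose k) * c ^ k * complex_of_real (1 / Suc k ^ card I))"
    by (simp only: integral_mult_right_zero integral_complex_of_real
        integral_unit_cube_prod_power[OF assms])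
  finally show ?thesis
    by (simp add: binomial_inverse_power_sum_def)
qed

lemma nested_harmonic_sum_eq_binomial_inverse_power_sum:
  assumes "r \<ge> 1"
  shows "nested_harmonic_sum a r (Suc n) = binomial_inverse_power_sum (a - 1) r n"
  using assms
proof (induction r arbitrary: n rule: nat_induct_at_least)
  case base
  have "binomial_inverse_power_sum (a - 1) 1 n = (\<Sum>i\<le>n. a ^ i) / of_nat (Suc n)"
    using binomial_inverse_power_sum_Suc[of "a - 1" 0 n] by (simp add: binomial_inverse_power_sum_0)
  with nested_harmonic_sum_1[of a n] show ?case
    by simp
next
  case (Suc r)
  then obtain r' where "r = Suc r'"
    using not0_implies_Suc by fastforce
  with Suc.IH show ?case
    by (simp add: nested_harmonic_sum_Suc binomial_inverse_power_sum_Suc)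
qed

theorem lemma2p1:
  fixes \<alpha> :: complex and m r :: nat
  assumes "m \<ge> 1" and "r \<ge> 1"
  shows "(LINT x | PiM {..<r} (\<lambda>_. restrict_space lborel {0..1::real}).
            (1 - (1 - \<alpha>) * complex_of_real (\<Prod>i<r. x i)) ^ (m - 1))
       = (\<Sum>ms \<in> {ms :: nat list. length ms = r \<and> sorted_wrt (\<ge>) ms \<and> set ms \<subseteq> {1..m}}.
            \<alpha> ^ (ms ! (r - 1) - 1) / (of_nat m * (\<Prod>i<r - 1. of_nat (ms ! i))))"
proof -
  obtain n where m: "m = Suc n"
    using assms(1) not0_implies_Suc by fastforce
  have integrand: "(1 - (1 - \<alpha>) * z) ^ (m - 1) = (1 + (\<alpha> - 1) * z) ^ n" for z :: complex
    by (simp add: m algebra_simps)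
  have "binomial_inverse_power_sum (\<alpha> - 1) (card {..<r}) n = nested_harmonic_sum \<alpha> r m"
    by (simp add: m nested_harmonic_sum_eq_binomial_inverse_power_sum[OF assms(2)])
  then show ?thesis
    unfolding integrand integral_unit_cube_binomial[OF finite_lessThan]
    by (simp add: nested_harmonic_sum_def nonincreasing_lists_def)
qed

end
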